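(* Let $\mathcal{B}$ be a nontrivial boolean algebra and let $Y\subseteq \mathcal{B}^n$ be an algebraic set over $\mathcal{B}$. Then $Y$ is irreducible over $\mathcal{B}$ if and only if the coordinate algebra $\Gamma_{\mathcal{B}}(Y)$ embeds into $\mathcal{B}$.
   Context: Boolean algebras are considered as structures in the language $\{\vee,\cdot,\bar{\ },0,1\}$ (join, meet, complement, constants). A boolean equation in variables $X=\{x_1,\dots,x_n\}$ is an expression $t(X)=s(X)$ with $t,s$ terms of this language; a system is any set of such equations, and $V_{\mathcal{B}}(S)\subseteq\mathcal{B}^n$ denotes its solution set. A set $Y\subseteq\mathcal{B}^n$ is algebraic if $Y=V_{\mathcal{B}}(S)$ for some system $S$. A nonempty algebraic set is irreducible if it is not a finite union of proper algebraic subsets. For an algebraic set $Y$, define $t\sim_Y s$ on terms in $X$ iff $t(P)=s(P)$ for every $P\in Y$; the set of equivalence classes, with the induced operations, is the coordinate algebra $\Gamma_{\mathcal{B}}(Y)$ (it is a finite boolean algebra generated by the classes of $x_1,\dots,x_n$). *)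

theory Defs
  imports Main
begin

datatype bterm = Var nat | Join bterm bterm | Meet bterm bterm | Compl bterm | Zero | One

fun bvars :: "bterm \<Rightarrow> nat set" where
  "bvars (Var i) = {i}"
| "bvars (Join t s) = bvars t \<union> bvars s"
| "bvars (Meet t s) = bvars t \<union> bvars s"
| "bvars (Compl t) = bvars t"
| "bvars Zero = {}"
| "bvars One = {}"

definition terms_in :: "nat \<Rightarrow> bterm set" where
  "terms_in n = {t. bvars t \<subseteq> {..<n}}"

fun beval :: "bterm \<Rightarrow> 'a::boolean_algebra list \<Rightarrow> 'a" where
  "beval (Var i) P = P ! i"
| "beval (Join t s) P = sup (beval t P) (beval s P)"
| "beval (Meet t s) P = inf (beval t P) (beval s P)"
| "beval (Compl t) P = - beval t P"
| "beval Zero P = bot"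
| "beval One P = top"

definition Bpow :: "nat \<Rightarrow> 'a::boolean_algebra list set" where
  "Bpow n = {P. length P = n}"

definition solV :: "nat \<Rightarrow> (bterm \<times> bterm) set \<Rightarrow> 'a::boolean_algebra list set" where
  "solV n S = {P \<in> Bpow n. \<forall>(t, s) \<in> S. beval t P = beval s P}"

definition algebraic :: "nat \<Rightarrow> 'a::boolean_algebra list set \<Rightarrow> bool" where
  "algebraic n Y \<longleftrightarrow> (\<exists>S. S \<subseteq> terms_in n \<times> terms_in n \<and> Y = solV n S)"

definition irreducible_alg :: "nat \<Rightarrow> 'a::boolean_algebra list set \<Rightarrow> bool" where
  "irreducible_alg n Y \<longleftrightarrow> algebraic n Y \<and> Y \<noteq> {} \<and>
     \<not> (\<exists>F. finite F \<and> (\<forall>Z\<in>F. algebraic n Z \<and> Z \<subset> Y) \<and> Y = \<Union>F)"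

definition simY :: "nat \<Rightarrow> 'a::boolean_algebra list set \<Rightarrow> (bterm \<times> bterm) set" where
  "simY n Y = {(t, s). t \<in> terms_in n \<and> s \<in> terms_in n \<and> (\<forall>P\<in>Y. beval t P = beval s P)}"

definition cclass :: "nat \<Rightarrow> 'a::boolean_algebra list set \<Rightarrow> bterm \<Rightarrow> bterm set" where
  "cclass n Y t = simY n Y `` {t}"

definition coord_carrier :: "nat \<Rightarrow> 'a::boolean_algebra list set \<Rightarrow> bterm set set" where
  "coord_carrier n Y = terms_in n // simY n Y"

text \<open>An embedding (injective boolean-algebra homomorphism) of the coordinate algebra
  Gamma_B(Y) into B.  The operations of Gamma_B(Y) are the induced ones:
  [t] v [s] = [t v s], etc.\<close>
definition coord_embeds :: "nat \<Rightarrow> 'a::boolean_algebra list set \<Rightarrow> bool" where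
  "coord_embeds n Y \<longleftrightarrow> (\<exists>h :: bterm set \<Rightarrow> 'a.
      inj_on h (coord_carrier n Y) \<and>
      (\<forall>t\<in>terms_in n. \<forall>s\<in>terms_in n.
          h (cclass n Y (Join t s)) = sup (h (cclass n Y t)) (h (cclass n Y s)) \<and>
          h (cclass n Y (Meet t s)) = inf (h (cclass n Y t)) (h (cclass n Y s))) \<and>
      (\<forall>t\<in>terms_in n. h (cclass n Y (Compl t)) = - h (cclass n Y t)) \<and>
      h (cclass n Y Zero) = bot \<and> h (cclass n Y One) = top)"

end

theory Submission
  imports Defs "HOL-Library.FuncSet"
begin

text \<open>Call P \<in> Y generic if every equation in x_1, ..., x_n holding at P holds on all of Y;
  both conditions say that Y has a generic point. Evaluation at a generic point is a well-defined
  injective homomorphism from the coordinate algebra into B, and conversely the images of the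
  classes of the variables under an embedding form a generic point. A generic point lies in a
  member of any finite cover of Y by algebraic sets, and that member then contains all of Y. If
  there is no generic point, Y is the union of its proper subsets cut out by single equations
  t = s; there are only finitely many of these because, by Boole's expansion
  t = x_i t[x_i := 1] \<squnion> -x_i t[x_i := 0], a term function on B^n is determined by its
  values on {0, 1}^n.\<close>

lemma inf_inf_distrib: "inf p (inf x y) = inf (inf p x) (inf p (y::'a::lattice))"
  by (simp add: inf.assoc inf.left_commute)

lemma inf_compl_absorb: "inf p (- inf p x) = inf p (- (x::'a::boolean_algebra))"
  by (simp add: inf_sup_distrib1)

lemma inf_beval_cong:
  fixes P Q :: "'a::boolean_algebra list"
  assumes "\<And>j. inf p (P ! j) = inf p (Q ! j)"
  shows "inf p (beval t P) = inf p (beval t Q)"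
proof (induction t)
  case (Join t s)
  then show ?case by (simp add: inf_sup_distrib1)
next
  case (Meet t s)
  then show ?case by (simp only: beval.simps inf_inf_distrib[of p])
next
  case (Compl t)
  then show ?case by (metis beval.simps(4) inf_compl_absorb)
qed (simp_all add: assms)

lemma eq_by_inf_cases:
  fixes x y :: "'a::boolean_algebra"
  assumes "inf p x = inf p y" and "inf (- p) x = inf (- p) y"
  shows "x = y"
  by (metis assms inf_sup_distrib2 inf_top_left sup_compl_top)

lemma beval_eq_by_cases:
  fixes P :: "'a::boolean_algebra list"
  assumes "beval t (P[i := top]) = beval s (P[i := top])"
    and "beval t (P[i := bot]) = beval s (P[i := bot])"
  shows "beval t P = beval s P"
proof (rule eq_by_inf_cases)
  let ?p = "P ! i"
  have upd: "P[i := c] ! j = (if j = i \<and> i < length P then c else P ! j)" for c j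
    by (cases "i < length P") (auto simp: list_update_beyond)
  have "inf ?p (P ! j) = inf ?p (P[i := top] ! j)" for j
    by (simp add: upd)
  from inf_beval_cong[OF this] assms(1)
  show "inf ?p (beval t P) = inf ?p (beval s P)" by metis
  have "inf (- ?p) (P ! j) = inf (- ?p) (P[i := bot] ! j)" for j
    by (simp add: upd)
  from inf_beval_cong[OF this] assms(2)
  show "inf (- ?p) (beval t P) = inf (- ?p) (beval s P)" by metis
qed

lemma beval_eq_if_eq_on_crisp:
  fixes P :: "'a::boolean_algebra list"
  assumes "\<And>Q :: 'a list. length Q = length P \<Longrightarrow> set Q \<subseteq> {bot, top} \<Longrightarrow> beval t Q = beval s Q"
  shows "beval t P = beval s P"
proof -
  have "beval t Q = beval s Q"
    if "length Q = length P" "\<forall>i<length Q. k \<le> i \<longrightarrow> Q ! i \<in> {bot, top}" for k and Q :: "'a list"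
    using that
  proof (induction k arbitrary: Q)
    case 0
    then have "set Q \<subseteq> {bot, top}" by (auto simp: set_conv_nth)
    with 0 show ?case by (simp add: assms)
  next
    case (Suc k)
    have update: "beval t (Q[k := c]) = beval s (Q[k := c])" if "c \<in> {bot, top}" for c
    proof (rule Suc.IH)
      show "length (Q[k := c]) = length P" using Suc.prems(1) by simp
      show "\<forall>i<length (Q[k := c]). k \<le> i \<longrightarrow> Q[k := c] ! i \<in> {bot, top}"
      proof (intro allI impI)
        fix i assume "i < length (Q[k := c])" "k \<le> i"
        then show "Q[k := c] ! i \<in> {bot, top}"
          using Suc.prems(2) that by (cases "i = k") auto
      qed
    qed
    have "beval t (Q[k := top]) = beval s (Q[k := top])" by (rule update) simp
    moreover have "beval t (Q[k := bot]) = beval s (Q[k := bot])" by (rule update) simp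
    ultimately show ?case by (rule beval_eq_by_cases)
  qed
  then show ?thesis by (metis order.strict_iff_not)
qed

lemma beval_crisp:
  fixes Q :: "'a::boolean_algebra list"
  assumes "set Q \<subseteq> {bot, top}" and "bvars t \<subseteq> {..<length Q}"
  shows "beval t Q \<in> {bot, top}"
  using assms(2) by (induction t) (use assms(1) nth_mem in auto)

text \<open>Restricting to B^n makes equality of term functions mean agreement on B^n.\<close>
definition term_fun :: "nat \<Rightarrow> bterm \<Rightarrow> 'a::boolean_algebra list \<Rightarrow> 'a" where
  "term_fun n t = restrict (beval t) (Bpow n)"

lemma finite_term_funs:
  "finite (term_fun n ` terms_in n :: ('a::boolean_algebra list \<Rightarrow> 'a) set)"
proof -
  define C :: "'a list set" where "C = {Q. set Q \<subseteq> {bot, top} \<and> length Q = n}"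
  have "finite C"
    unfolding C_def by (rule finite_lists_length_eq) simp
  have "inj_on (\<lambda>f. restrict f C) (term_fun n ` terms_in n :: ('a list \<Rightarrow> 'a) set)"
  proof (rule inj_onI, clarify)
    fix t s assume eq: "restrict (term_fun n t) C = (restrict (term_fun n s) C :: 'a list \<Rightarrow> 'a)"
    have "beval t P = beval s P" if "length (P :: 'a list) = n" for P
    proof (rule beval_eq_if_eq_on_crisp)
      fix Q :: "'a list" assume "length Q = length P" "set Q \<subseteq> {bot, top}"
      then have "Q \<in> C" "Q \<in> Bpow n" using that by (auto simp: C_def Bpow_def)
      then show "beval t Q = beval s Q"
        using fun_cong[OF eq, of Q] by (simp add: term_fun_def)
    qed
    then show "term_fun n t = (term_fun n s :: 'a list \<Rightarrow> 'a)"
      by (auto simp: term_fun_def Bpow_def)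
  qed
  moreover have "(\<lambda>f. restrict f C) ` (term_fun n ` terms_in n :: ('a list \<Rightarrow> 'a) set)
      \<subseteq> C \<rightarrow>\<^sub>E {bot, top}"
  proof (clarify)
    fix t assume "t \<in> terms_in n"
    then have "beval t Q \<in> {bot, top}" if "Q \<in> C" for Q
      using that by (intro beval_crisp) (auto simp: C_def terms_in_def)
    moreover have "restrict (term_fun n t) C = restrict (beval t) C"
      by (auto simp: term_fun_def C_def Bpow_def)
    ultimately show "restrict (term_fun n t) C \<in> C \<rightarrow>\<^sub>E {bot, top}"
      by (simp add: restrict_PiE_iff)
  qed
  moreover have "finite (C \<rightarrow>\<^sub>E {bot, top :: 'a})"
    using \<open>finite C\<close> by (simp add: finite_PiE)
  ultimately show ?thesis
    by (meson finite_imageD finite_subset)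
qed

lemma algebraic_subset_Bpow: "algebraic n Y \<Longrightarrow> Y \<subseteq> Bpow n"
  by (auto simp: algebraic_def solV_def)

lemma algebraic_equation_subset:
  assumes "algebraic n Y" and "t \<in> terms_in n" and "s \<in> terms_in n"
  shows "algebraic n {P \<in> Y. beval t P = beval s P}"
proof -
  obtain S where S: "S \<subseteq> terms_in n \<times> terms_in n" "Y = solV n S"
    using assms(1) by (auto simp: algebraic_def)
  have "{P \<in> Y. beval t P = beval s P} = solV n (insert (t, s) S)"
    using S(2) by (auto simp: solV_def)
  then show ?thesis
    using S(1) assms(2,3) unfolding algebraic_def by blast
qed

lemma finite_equation_subsets:
  fixes Y :: "'a::boolean_algebra list set"
  assumes "algebraic n Y"
  shows "finite {{P \<in> Y. beval t P = beval s P} | t s. t \<in> terms_in n \<and> s \<in> terms_in n}"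
proof -
  let ?TF = "term_fun n ` terms_in n :: ('a list \<Rightarrow> 'a) set"
  have "{{P \<in> Y. beval t P = beval s P} | t s. t \<in> terms_in n \<and> s \<in> terms_in n}
      \<subseteq> (\<lambda>(f, g). {P \<in> Y. f P = g P}) ` (?TF \<times> ?TF)"
  proof clarify
    fix t s assume "t \<in> terms_in n" "s \<in> terms_in n"
    moreover have "{P \<in> Y. beval t P = beval s P} = {P \<in> Y. term_fun n t P = term_fun n s P}"
      using algebraic_subset_Bpow[OF assms] by (auto simp: term_fun_def)
    ultimately show "{P \<in> Y. beval t P = beval s P} \<in> (\<lambda>(f, g). {P \<in> Y. f P = g P}) ` (?TF \<times> ?TF)"
      by force
  qed
  then show ?thesis
    using finite_term_funs by (meson finite_SigmaI finite_imageI finite_subset)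
qed

lemma terms_in_simps [simp]:
  "Join t s \<in> terms_in n \<longleftrightarrow> t \<in> terms_in n \<and> s \<in> terms_in n"
  "Meet t s \<in> terms_in n \<longleftrightarrow> t \<in> terms_in n \<and> s \<in> terms_in n"
  "Compl t \<in> terms_in n \<longleftrightarrow> t \<in> terms_in n"
  "Zero \<in> terms_in n" "One \<in> terms_in n"
  by (auto simp: terms_in_def)

lemma cclass_eq:
  "t \<in> terms_in n \<Longrightarrow> cclass n Y t = {s \<in> terms_in n. \<forall>P\<in>Y. beval t P = beval s P}"
  by (auto simp: cclass_def simY_def)

lemma cclass_eq_iff:
  assumes "t \<in> terms_in n" and "s \<in> terms_in n"
  shows "cclass n Y t = cclass n Y s \<longleftrightarrow> (\<forall>P\<in>Y. beval t P = beval s P)"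
  using assms by (auto simp: cclass_eq)

lemma coord_carrier_eq: "coord_carrier n Y = cclass n Y ` terms_in n"
  by (auto simp: coord_carrier_def quotient_def cclass_def)

definition generic_point :: "nat \<Rightarrow> 'a::boolean_algebra list set \<Rightarrow> 'a list \<Rightarrow> bool" where
  "generic_point n Y P \<longleftrightarrow> P \<in> Y \<and>
     (\<forall>t\<in>terms_in n. \<forall>s\<in>terms_in n. beval t P = beval s P \<longrightarrow> (\<forall>Q\<in>Y. beval t Q = beval s Q))"

lemma coord_embeds_if_generic_point:
  assumes "generic_point n Y P"
  shows "coord_embeds n Y"
proof -
  define h where "h C = beval (SOME t. t \<in> C) P" for C :: "bterm set"
  have h_cclass: "h (cclass n Y t) = beval t P" if "t \<in> terms_in n" for t
  proof -
    have "t \<in> cclass n Y t" using that by (simp add: cclass_eq)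
    then have "(SOME u. u \<in> cclass n Y t) \<in> cclass n Y t" by (rule someI)
    then have "\<forall>Q\<in>Y. beval t Q = beval (SOME u. u \<in> cclass n Y t) Q"
      using that by (simp add: cclass_eq)
    moreover have "P \<in> Y"
      using assms by (simp add: generic_point_def)
    ultimately have "beval t P = beval (SOME u. u \<in> cclass n Y t) P"
      by blast
    then show ?thesis
      unfolding h_def by (rule sym)
  qed
  have "inj_on h (coord_carrier n Y)"
  proof (rule inj_onI)
    fix C D assume C: "C \<in> coord_carrier n Y" and D: "D \<in> coord_carrier n Y" and "h C = h D"
    obtain t where t: "t \<in> terms_in n" "C = cclass n Y t"
      using C by (auto simp: coord_carrier_eq)
    obtain s where s: "s \<in> terms_in n" "D = cclass n Y s"
      using D by (auto simp: coord_carrier_eq)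
    have "beval t P = beval s P"
      using \<open>h C = h D\<close> by (simp add: t s h_cclass)
    then have "\<forall>Q\<in>Y. beval t Q = beval s Q"
      using assms t(1) s(1) unfolding generic_point_def by blast
    then show "C = D"
      by (simp add: t s cclass_eq_iff)
  qed
  then show ?thesis
    unfolding coord_embeds_def by (intro exI[of _ h]) (simp add: h_cclass)
qed

lemma generic_point_if_coord_embeds:
  fixes Y :: "'a::boolean_algebra list set"
  assumes "algebraic n Y" and "coord_embeds n Y"
  shows "\<exists>P. generic_point n Y P"
proof -
  obtain h :: "bterm set \<Rightarrow> 'a" where
    inj: "inj_on h (coord_carrier n Y)" and
    hom: "\<forall>t\<in>terms_in n. \<forall>s\<in>terms_in n.
          h (cclass n Y (Join t s)) = sup (h (cclass n Y t)) (h (cclass n Y s)) \<and>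
          h (cclass n Y (Meet t s)) = inf (h (cclass n Y t)) (h (cclass n Y s))" and
    hom_compl: "\<forall>t\<in>terms_in n. h (cclass n Y (Compl t)) = - h (cclass n Y t)" and
    hom_consts: "h (cclass n Y Zero) = bot" "h (cclass n Y One) = top"
    using assms(2) unfolding coord_embeds_def by blast
  define P where "P = map (\<lambda>i. h (cclass n Y (Var i))) [0..<n]"
  have h_cclass: "h (cclass n Y t) = beval t P" if "t \<in> terms_in n" for t
    using that
  proof (induction t)
    case (Var i)
    then show ?case by (simp add: P_def terms_in_def)
  qed (use hom hom_compl hom_consts in auto)
  have P_equations: "beval t P = beval s P \<longleftrightarrow> (\<forall>Q\<in>Y. beval t Q = beval s Q)"
    if "t \<in> terms_in n" "s \<in> terms_in n" for t s
    using that inj by (auto simp: h_cclass[symmetric] cclass_eq_iff[symmetric] coord_carrier_eq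
        dest: inj_onD)
  obtain S where S: "S \<subseteq> terms_in n \<times> terms_in n" "Y = solV n S"
    using assms(1) by (auto simp: algebraic_def)
  have "beval t P = beval s P" if "(t, s) \<in> S" for t s
  proof -
    have "\<forall>Q\<in>Y. beval t Q = beval s Q"
      using S(2) that by (auto simp: solV_def)
    then show ?thesis
      using P_equations S(1) that by blast
  qed
  then have "P \<in> Y"
    using S(2) by (auto simp: solV_def Bpow_def P_def)
  then show ?thesis
    using P_equations unfolding generic_point_def by blast
qed

lemma algebraic_subset_eq_if_generic_point:
  assumes "algebraic n Y" and "algebraic n Z" and "Z \<subseteq> Y"
    and "generic_point n Y P" and "P \<in> Z"
  shows "Z = Y"
proof -
  obtain T where T: "T \<subseteq> terms_in n \<times> terms_in n" "Z = solV n T"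
    using assms(2) by (auto simp: algebraic_def)
  have "Q \<in> Z" if "Q \<in> Y" for Q
    using that assms(4,5) T algebraic_subset_Bpow[OF assms(1)]
    by (fastforce simp: solV_def generic_point_def)
  then show ?thesis using assms(3) by blast
qed

lemma irreducible_if_generic_point:
  assumes "algebraic n Y" and "generic_point n Y P"
  shows "irreducible_alg n Y"
proof -
  have "\<not> Y = \<Union>F" if "\<forall>Z\<in>F. algebraic n Z \<and> Z \<subset> Y" for F
  proof
    assume "Y = \<Union>F"
    then obtain Z where "Z \<in> F" "P \<in> Z"
      using assms(2) by (auto simp: generic_point_def)
    then show False
      using that algebraic_subset_eq_if_generic_point[OF assms(1) _ _ assms(2)] by blast
  qed
  moreover have "Y \<noteq> {}"
    using assms(2) by (auto simp: generic_point_def)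
  ultimately show ?thesis
    using assms(1) unfolding irreducible_alg_def by blast
qed

lemma generic_point_if_irreducible:
  assumes "irreducible_alg n Y"
  shows "\<exists>P. generic_point n Y P"
proof (rule ccontr)
  assume no_generic: "\<nexists>P. generic_point n Y P"
  have alg: "algebraic n Y"
    using assms by (simp add: irreducible_alg_def)
  define F where "F = {Z \<in> {{P \<in> Y. beval t P = beval s P} | t s. t \<in> terms_in n \<and> s \<in> terms_in n}.
      Z \<subset> Y}"
  have "finite F"
    unfolding F_def using finite_equation_subsets[OF alg] by simp
  moreover have "\<forall>Z\<in>F. algebraic n Z \<and> Z \<subset> Y"
    unfolding F_def using algebraic_equation_subset[OF alg] by blast
  moreover have "Y \<subseteq> \<Union>F"
  proof
    fix P assume "P \<in> Y"
    then obtain t s Q where ts: "t \<in> terms_in n" "s \<in> terms_in n" "beval t P = beval s P"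
      and Q: "Q \<in> Y" "beval t Q \<noteq> beval s Q"
      using no_generic unfolding generic_point_def by blast
    then have "{P \<in> Y. beval t P = beval s P} \<in> F"
      unfolding F_def by blast
    then show "P \<in> \<Union>F"
      using \<open>P \<in> Y\<close> ts(3) by blast
  qed
  then have "Y = \<Union>F"
    unfolding F_def by blast
  ultimately show False
    using assms unfolding irreducible_alg_def by blast
qed

theorem theorem1:
  fixes Y :: "'a::boolean_algebra list set" and n :: nat
  assumes "(bot::'a) \<noteq> top"
    and "algebraic n Y"
  shows "irreducible_alg n Y \<longleftrightarrow> coord_embeds n Y"
proof -
  have "irreducible_alg n Y \<longleftrightarrow> (\<exists>P. generic_point n Y P)"
    using assms(2) irreducible_if_generic_point generic_point_if_irreducible by blast
  also have "\<dots> \<longleftrightarrow> coord_embeds n Y"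
    using assms(2) coord_embeds_if_generic_point generic_point_if_coord_embeds by blast
  finally show ?thesis .
qed

end
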